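(* Let $0<\delta\leq 1\leq T$, let $\varepsilon>0$ be the desired precision, and let $\beta\in(1,2)$. Choose positive integers $n_o=O(\log\frac{1}{\varepsilon})$, $n_s=O(\log\frac{1}{\varepsilon})$, $n_l=O(\log\frac{1}{\varepsilon}+\log\frac{1}{\delta})$, a nonnegative integer $N=O(\log\log\frac{1}{\varepsilon}+\log\frac{1}{\delta})$, and a negative integer $M$ with $|M|=O(\log T)$. Let $s_{o,1},\dots,s_{o,n_o}$ and $w_{o,1},\dots,w_{o,n_o}$ be the nodes and weights of the $n_o$-point Gauss–Jacobi quadrature on $[0,2^M]$ with weight function $s^{\beta-1}$; for $j=M,\dots,-1$ let $s_{j,1},\dots,s_{j,n_s}$ and $w_{j,1},\dots,w_{j,n_s}$ be the nodes and weights of the $n_s$-point Gauss–Legendre quadrature on $[2^j,2^{j+1}]$; and for $j=0,\dots,N$ let $s_{j,1},\dots,s_{j,n_l}$ and $w_{j,1},\dots,w_{j,n_l}$ be the nodes and weights of the $n_l$-point Gauss–Legendre quadrature on $[2^j,2^{j+1}]$. Then (with the implied constants in the $O$-bounds suitably chosen) for all $t\in[\delta,T]$, $$\left|\frac{\Gamma(\beta)}{t^\beta}-\left(\sum_{k=1}^{n_o}e^{-s_{o,k}t}w_{o,k}+\sum_{j=M}^{-1}\sum_{k=1}^{n_s}e^{-s_{j,k}t}s_{j,k}^{\beta-1}w_{j,k}+\sum_{j=0}^{N}\sum_{k=1}^{n_l}e^{-s_{j,k}t}s_{j,k}^{\beta-1}w_{j,k}\right)\right|\leq\varepsilon.$$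
   Context: $\Gamma$ is the Euler Gamma function. The $n$-point Gauss–Legendre quadrature on $[a,b]$ is the rule $\int_a^b\phi(s)\,ds\approx\sum_k w_k\phi(s_k)$ exact for polynomials of degree $\leq 2n-1$. The $n$-point Gauss–Jacobi quadrature on $[0,a]$ with weight $s^{\beta-1}$ is the rule $\int_0^a\phi(s)s^{\beta-1}\,ds\approx\sum_k w_k\phi(s_k)$ exact for polynomials $\phi$ of degree $\leq 2n-1$. *)

theory Defs
  imports "HOL-Analysis.Analysis" "HOL-Computational_Algebra.Polynomial"
begin

definition gauss_legendre :: "nat \<Rightarrow> real \<Rightarrow> real \<Rightarrow> (nat \<Rightarrow> real) \<Rightarrow> (nat \<Rightarrow> real) \<Rightarrow> bool" where
  "gauss_legendre n a b s w \<longleftrightarrow>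
     (\<forall>p :: real poly. degree p \<le> 2 * n - 1 \<longrightarrow>
        (\<Sum>k=1..n. w k * poly p (s k)) = integral {a..b} (poly p))"

definition gauss_jacobi :: "nat \<Rightarrow> real \<Rightarrow> real \<Rightarrow> (nat \<Rightarrow> real) \<Rightarrow> (nat \<Rightarrow> real) \<Rightarrow> bool" where
  "gauss_jacobi n \<beta> a s w \<longleftrightarrow>
     (\<forall>p :: real poly. degree p \<le> 2 * n - 1 \<longrightarrow>
        (\<Sum>k=1..n. w k * poly p (s k)) = integral {0..a} (\<lambda>x. poly p x * x powr (\<beta> - 1)))"

end

theory Submission
  imports Defs
begin

text \<open>Write \<open>\<Gamma>(\<beta>)/t\<^sup>\<beta>\<close> as \<open>\<integral>\<^sub>0\<^sup>\<infinity> exp(-st) s\<^sup>\<beta>\<^sup>-\<^sup>1 ds\<close>, truncate at \<open>R = 2\<^sup>N\<^sup>+\<^sup>1\<close> and split \<open>[0,R]\<close>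
  at the dyadic points \<open>2\<^sup>M, \<dots>, 2\<^sup>N\<close>. Whatever its weight, a Gauss rule has its nodes in the
  interval and nonnegative weights summing to the mass of the weight function (test it on
  squared Lagrange-type polynomials), so its error on a continuous \<open>g\<close> is at most twice that mass
  times the distance of \<open>g\<close> to polynomials of degree \<open>2n - 1\<close>. On \<open>[0,2\<^sup>M]\<close> with \<open>2\<^sup>M t \<le> 1\<close> the
  Taylor polynomial of \<open>exp(-st)\<close> at \<open>0\<close> is such an approximation; on a dyadic interval \<open>[a,2a]\<close>
  the Taylor expansions of \<open>exp(-st)\<close> and of \<open>s\<^sup>\<beta>\<^sup>-\<^sup>1\<close> at \<open>3a/2\<close> converge like \<open>2\<^sup>-\<^sup>n\<close>, because
  \<open>|s - 3a/2| \<le> a/2\<close>. Summing the four error budgets (tail, Jacobi block, small and large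
  Legendre blocks) gives the claim with logarithmic numbers of nodes.\<close>

locale gauss_rule =
  fixes n :: nat and a b :: real and \<omega> :: "real \<Rightarrow> real" and s w :: "nat \<Rightarrow> real"
  assumes n_pos: "0 < n" and a_less_b: "a < b"
    and weight_cont: "continuous_on {a..b} \<omega>"
    and weight_nonneg: "\<And>x. x \<in> {a..b} \<Longrightarrow> 0 \<le> \<omega> x"
    and weight_pos: "\<And>x. x \<in> {a<..<b} \<Longrightarrow> 0 < \<omega> x"
    and exact: "\<And>p. degree p \<le> 2*n-1 \<Longrightarrow>
      (\<Sum>k=1..n. w k * poly p (s k)) = integral {a..b} (\<lambda>x. poly p x * \<omega> x)"
begin

lemma weighted_integral_pos:
  assumes "q \<noteq> 0" and q_nonneg: "\<And>x. x \<in> {a..b} \<Longrightarrow> 0 \<le> poly q x"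
  shows "0 < integral {a..b} (\<lambda>x. poly q x * \<omega> x)"
proof -
  have cont: "continuous_on {a..b} (\<lambda>x. poly q x * \<omega> x)"
    by (intro continuous_intros weight_cont)
  have nonneg: "\<And>x. x \<in> {a..b} \<Longrightarrow> 0 \<le> poly q x * \<omega> x"
    using q_nonneg weight_nonneg by simp
  have "0 \<le> integral {a..b} (\<lambda>x. poly q x * \<omega> x)"
    using cont nonneg integrable_continuous_real by (blast intro: integral_nonneg)
  moreover have "integral {a..b} (\<lambda>x. poly q x * \<omega> x) \<noteq> 0"
  proof
    assume "integral {a..b} (\<lambda>x. poly q x * \<omega> x) = 0"
    then have "\<forall>x\<in>{a..b}. poly q x * \<omega> x = 0"
      using integral_eq_0_iff[OF cont a_less_b] nonneg by blast
    then have "{a<..<b} \<subseteq> {x. poly q x = 0}"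
      using weight_pos by fastforce
    then have "finite {a<..<b}"
      using poly_roots_finite[OF \<open>q \<noteq> 0\<close>] finite_subset by blast
    with infinite_Ioo[OF a_less_b] show False by blast
  qed
  ultimately show ?thesis by simp
qed

text \<open>Its square, possibly times a linear factor, is the test polynomial of the classical
  arguments below.\<close>
definition node_poly :: "nat \<Rightarrow> real poly" where
  "node_poly k = (\<Prod>i\<in>{1..n}-{k}. [:- s i, 1:])"

lemma poly_node_poly: "poly (node_poly k) x = (\<Prod>i\<in>{1..n}-{k}. x - s i)"
  by (simp add: node_poly_def poly_prod)

lemma node_poly_nonzero: "node_poly k \<noteq> 0"
  by (simp add: node_poly_def)

lemma degree_node_poly:
  assumes "k \<in> {1..n}" shows "degree (node_poly k) \<le> n - 1"
proof -
  have "degree (node_poly k) \<le> sum (degree \<circ> (\<lambda>i. [:- s i, 1:])) ({1..n}-{k})"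
    unfolding node_poly_def by (rule degree_prod_sum_le) simp
  also have "\<dots> = n - 1" using assms by simp
  finally show ?thesis .
qed

lemma degree_node_poly_square:
  assumes "k \<in> {1..n}" shows "degree (node_poly k ^ 2) \<le> 2 * (n - 1)"
  using degree_power_le[of "node_poly k" 2] degree_node_poly[OF assms] by simp

lemma node_poly_at_other_node:
  assumes "l \<in> {1..n}" "l \<noteq> k" shows "poly (node_poly k) (s l) = 0"
  unfolding poly_node_poly using assms by (intro prod_zero) auto

lemma sum_nodes_single:
  assumes k: "k \<in> {1..n}" and vanish: "\<And>l. l \<in> {1..n} \<Longrightarrow> l \<noteq> k \<Longrightarrow> poly q (s l) = 0"
  shows "(\<Sum>l=1..n. w l * poly q (s l)) = w k * poly q (s k)"
proof -
  have "(\<Sum>l=1..n. w l * poly q (s l)) = w k * poly q (s k) + (\<Sum>l\<in>{1..n}-{k}. w l * poly q (s l))"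
    using k by (simp add: sum.remove)
  also have "(\<Sum>l\<in>{1..n}-{k}. w l * poly q (s l)) = 0"
    using vanish by (intro sum.neutral) auto
  finally show ?thesis by simp
qed

lemma nodes_distinct:
  assumes i: "i \<in> {1..n}" and k: "k \<in> {1..n}" and "i \<noteq> k"
  shows "s i \<noteq> s k"
proof
  assume same: "s i = s k"
  define q where "q = node_poly k ^ 2"
  have "degree q \<le> 2*n-1"
    unfolding q_def using degree_node_poly_square[OF k] n_pos by simp
  then have "integral {a..b} (\<lambda>x. poly q x * \<omega> x) = (\<Sum>l=1..n. w l * poly q (s l))"
    by (rule exact[symmetric])
  also have "\<dots> = 0"
  proof (intro sum.neutral ballI)
    fix l assume l: "l \<in> {1..n}"
    have "poly (node_poly k) (s l) = 0"
    proof (cases "l = k")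
      case True
      then show ?thesis using node_poly_at_other_node[OF i \<open>i \<noteq> k\<close>] same by simp
    qed (use node_poly_at_other_node[OF l] in simp)
    then show "w l * poly q (s l) = 0" by (simp add: q_def)
  qed
  moreover have "0 < integral {a..b} (\<lambda>x. poly q x * \<omega> x)"
    by (rule weighted_integral_pos) (auto simp: q_def node_poly_nonzero)
  ultimately show False by simp
qed

lemma node_poly_at_own_node: "k \<in> {1..n} \<Longrightarrow> poly (node_poly k) (s k) \<noteq> 0"
  unfolding poly_node_poly using nodes_distinct by (auto simp: prod_zero_iff)

lemma weights_nonneg:
  assumes k: "k \<in> {1..n}" shows "0 \<le> w k"
proof -
  define q where "q = node_poly k ^ 2"
  have "degree q \<le> 2*n-1"
    unfolding q_def using degree_node_poly_square[OF k] n_pos by simp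
  then have "integral {a..b} (\<lambda>x. poly q x * \<omega> x) = (\<Sum>l=1..n. w l * poly q (s l))"
    by (rule exact[symmetric])
  also have "\<dots> = w k * poly q (s k)"
    by (rule sum_nodes_single[OF k]) (simp add: q_def node_poly_at_other_node)
  finally have "w k * poly q (s k) = integral {a..b} (\<lambda>x. poly q x * \<omega> x)" ..
  also have "\<dots> > 0"
    by (rule weighted_integral_pos) (auto simp: q_def node_poly_nonzero)
  finally show ?thesis
    using node_poly_at_own_node[OF k] by (simp add: q_def zero_less_mult_iff)
qed

lemma nodes_in_interval:
  assumes k: "k \<in> {1..n}" shows "s k \<in> {a..b}"
proof (rule ccontr)
  assume "s k \<notin> {a..b}"
  then obtain c :: real where c: "c \<noteq> 0" and pos: "\<And>x. x \<in> {a..b} \<Longrightarrow> 0 < c * (x - s k)"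
    by (cases "s k < a") (auto intro: that[of 1] that[of "-1"])
  \<comment> \<open>positive on \<open>[a,b]\<close>, but zero at every node\<close>
  define q where "q = node_poly k ^ 2 * [:- c * s k, c:]"
  have poly_q: "poly q x = poly (node_poly k) x ^ 2 * (c * (x - s k))" for x
    by (simp add: q_def algebra_simps)
  have "degree q \<le> degree (node_poly k ^ 2) + degree [:- c * s k, c:]"
    unfolding q_def by (rule degree_mult_le)
  also have "\<dots> \<le> 2*n-1"
    using degree_node_poly_square[OF k] n_pos c by simp
  finally have "(\<Sum>l=1..n. w l * poly q (s l)) = integral {a..b} (\<lambda>x. poly q x * \<omega> x)"
    by (rule exact)
  moreover have "(\<Sum>l=1..n. w l * poly q (s l)) = w k * poly q (s k)"
    by (rule sum_nodes_single[OF k]) (simp add: poly_q node_poly_at_other_node)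
  moreover have "poly q (s k) = 0" by (simp add: poly_q)
  moreover have "0 < integral {a..b} (\<lambda>x. poly q x * \<omega> x)"
  proof (rule weighted_integral_pos)
    have "[:- c * s k, c:] \<noteq> 0" using c by simp
    then show "q \<noteq> 0"
      unfolding q_def using node_poly_nonzero[of k] by (metis mult_eq_0_iff power_not_zero)
    show "0 \<le> poly q x" if "x \<in> {a..b}" for x using pos[OF that] by (simp add: poly_q)
  qed
  ultimately show False by simp
qed

lemma weights_sum: "(\<Sum>k=1..n. w k) = integral {a..b} \<omega>"
  using exact[of 1] by simp

lemma quadrature_error_le:
  assumes g_cont: "continuous_on {a..b} g" and deg: "degree p \<le> 2*n-1"
    and approx: "\<And>x. x \<in> {a..b} \<Longrightarrow> \<bar>g x - poly p x\<bar> \<le> e"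
  shows "\<bar>(\<Sum>k=1..n. w k * g (s k)) - integral {a..b} (\<lambda>x. g x * \<omega> x)\<bar> \<le> 2 * e * integral {a..b} \<omega>"
proof -
  have int_g: "(\<lambda>x. g x * \<omega> x) integrable_on {a..b}"
    by (intro integrable_continuous_real continuous_intros g_cont weight_cont)
  have int_p: "(\<lambda>x. poly p x * \<omega> x) integrable_on {a..b}"
    by (intro integrable_continuous_real continuous_intros weight_cont)
  have "\<bar>(\<Sum>k=1..n. w k * g (s k)) - (\<Sum>k=1..n. w k * poly p (s k))\<bar>
      \<le> (\<Sum>k=1..n. \<bar>w k * (g (s k) - poly p (s k))\<bar>)"
    unfolding sum_subtractf[symmetric] right_diff_distrib[symmetric] by (rule sum_abs)
  also have "\<dots> \<le> (\<Sum>k=1..n. w k * e)"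
    using weights_nonneg approx nodes_in_interval
    by (intro sum_mono) (simp add: abs_mult mult_left_mono)
  also have "\<dots> = (\<Sum>k=1..n. w k) * e"
    by (rule sum_distrib_right[symmetric])
  also have "\<dots> = e * integral {a..b} \<omega>"
    by (simp only: weights_sum mult.commute)
  finally have nodes: "\<bar>(\<Sum>k=1..n. w k * g (s k)) - (\<Sum>k=1..n. w k * poly p (s k))\<bar>
      \<le> e * integral {a..b} \<omega>" .
  have "norm (integral {a..b} (\<lambda>x. poly p x * \<omega> x - g x * \<omega> x)) \<le> integral {a..b} (\<lambda>x. e * \<omega> x)"
  proof (rule Henstock_Kurzweil_Integration.integral_norm_bound_integral)
    show "(\<lambda>x. poly p x * \<omega> x - g x * \<omega> x) integrable_on {a..b}"
      by (rule integrable_diff[OF int_p int_g])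
    show "(\<lambda>x. e * \<omega> x) integrable_on {a..b}"
      by (intro integrable_continuous_real continuous_intros weight_cont)
    show "norm (poly p x * \<omega> x - g x * \<omega> x) \<le> e * \<omega> x" if "x \<in> {a..b}" for x
      using approx[OF that] weight_nonneg[OF that]
      by (simp add: left_diff_distrib[symmetric] abs_mult abs_minus_commute mult_right_mono)
  qed
  then have integrals: "\<bar>integral {a..b} (\<lambda>x. poly p x * \<omega> x) - integral {a..b} (\<lambda>x. g x * \<omega> x)\<bar>
      \<le> e * integral {a..b} \<omega>"
    using integral_diff[OF int_p int_g] by simp
  from nodes integrals exact[OF deg] show ?thesis by linarith
qed

end

lemma taylor_poly_exists:
  fixes c :: "nat \<Rightarrow> real"
  shows "\<exists>p. degree p \<le> m - 1 \<and> (\<forall>x. poly p x = (\<Sum>k<m. c k * (x - x0)^k))"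
proof (intro exI conjI allI)
  let ?p = "\<Sum>k<m. smult (c k) ([:-x0, 1:]^k)"
  show "degree ?p \<le> m - 1"
  proof (rule degree_sum_le)
    fix k assume k: "k \<in> {..<m}"
    have "degree (smult (c k) ([:-x0, 1:]^k)) \<le> degree [:-x0, 1:] * k"
      using degree_smult_le degree_power_le order_trans by blast
    then show "degree (smult (c k) ([:-x0, 1:]^k)) \<le> m - 1" using k by simp
  qed simp
  show "poly ?p x = (\<Sum>k<m. c k * (x - x0)^k)" for x
    by (simp add: poly_sum)
qed

lemma power_div_fact_le_exp:
  fixes x :: real assumes "0 \<le> x" shows "x^m / fact m \<le> exp x"
proof -
  obtain t where t: "exp x = (\<Sum>k<Suc m. x^k / fact k) + (exp t / fact (Suc m)) * x ^ Suc m"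
    using Maclaurin_exp_le[of x "Suc m"] by blast
  have "x^m / fact m \<le> (\<Sum>k<Suc m. x^k / fact k)"
    by (rule member_le_sum) (use assms in auto)
  moreover have "0 \<le> (exp t / fact (Suc m)) * x ^ Suc m" using assms by simp
  ultimately show ?thesis using t by linarith
qed

lemma two_power_le_fact: "(2::real)^m \<le> 2 * fact m"
proof (induction m)
  case (Suc m)
  show ?case
  proof (cases m)
    case (Suc k)
    have "(2::real)^Suc m \<le> 2 * (2 * fact m)" using Suc.IH by simp
    also have "\<dots> \<le> 2 * (real (Suc m) * fact m)"
      using \<open>m = Suc k\<close> by (intro mult_left_mono mult_right_mono) auto
    finally show ?thesis by simp
  qed simp
qed simp

lemma exp_poly_approx_near_zero:
  fixes a t :: real
  assumes t: "0 \<le> t" and at: "a * t \<le> 1"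
  shows "\<exists>p. degree p \<le> m - 1 \<and> (\<forall>s\<in>{0..a}. \<bar>exp (-s*t) - poly p s\<bar> \<le> 6 * (1/2)^m)"
proof -
  obtain p where deg: "degree p \<le> m - 1"
    and poly_p: "\<And>x. poly p x = (\<Sum>k<m. ((-t)^k / fact k) * (x - 0)^k)"
    using taylor_poly_exists[of m "\<lambda>k. (-t)^k / fact k" 0] by blast
  have "\<bar>exp (-s*t) - poly p s\<bar> \<le> 6 * (1/2)^m" if s: "s \<in> {0..a}" for s
  proof -
    define x where "x = -t * s"
    obtain \<xi> where \<xi>: "\<bar>\<xi>\<bar> \<le> \<bar>x\<bar>" and taylor: "exp x = (\<Sum>k<m. x^k / fact k) + (exp \<xi> / fact m) * x ^ m"
      using Maclaurin_exp_le[of x m] by blast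
    have "\<bar>x\<bar> \<le> t * a" using s t by (simp add: x_def abs_mult mult_left_mono)
    then have x1: "\<bar>x\<bar> \<le> 1" using at by (simp add: mult.commute)
    have "poly p s = (\<Sum>k<m. x^k / fact k)"
      unfolding poly_p x_def power_mult_distrib by (simp add: algebra_simps)
    then have "\<bar>exp (-s*t) - poly p s\<bar> = exp \<xi> * \<bar>x\<bar>^m / fact m"
      using taylor by (simp add: x_def algebra_simps abs_mult power_abs)
    also have "\<dots> \<le> exp 1 * 1 / fact m"
      using \<xi> x1 by (intro divide_right_mono mult_mono power_le_one) auto
    also have "\<dots> = exp 1 * (1 / fact m)" by simp
    also have "\<dots> \<le> 3 * (2 * (1/2)^m)"
    proof (rule mult_mono)
      show "exp (1::real) \<le> 3" using exp_le by simp
      show "1 / fact m \<le> 2 * (1/2::real)^m"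
        using two_power_le_fact[of m] by (simp add: field_simps)
    qed auto
    finally show ?thesis by simp
  qed
  with deg show ?thesis by blast
qed

lemma exp_poly_approx_dyadic:
  fixes a t :: real
  assumes a: "0 < a" and t: "0 \<le> t"
  shows "\<exists>p. degree p \<le> m - 1 \<and> (\<forall>s\<in>{a..2*a}. \<bar>exp (-s*t) - poly p s\<bar> \<le> (1/2)^m)"
proof -
  define c where "c = 3*a/2"
  obtain p where deg: "degree p \<le> m - 1"
    and poly_p: "\<And>x. poly p x = (\<Sum>k<m. (exp (-c*t) * (-t)^k / fact k) * (x - c)^k)"
    using taylor_poly_exists[of m "\<lambda>k. exp (-c*t) * (-t)^k / fact k" c] by blast
  have "\<bar>exp (-s*t) - poly p s\<bar> \<le> (1/2)^m" if s: "s \<in> {a..2*a}" for s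
  proof -
    define x where "x = -t * (s - c)"
    obtain \<xi> where \<xi>: "\<bar>\<xi>\<bar> \<le> \<bar>x\<bar>" and taylor: "exp x = (\<Sum>k<m. x^k / fact k) + (exp \<xi> / fact m) * x ^ m"
      using Maclaurin_exp_le[of x m] by blast
    have exp_s: "exp (-s*t) = exp (-c*t) * exp x" by (simp add: x_def exp_add[symmetric] algebra_simps)
    have poly_s: "poly p s = exp (-c*t) * (\<Sum>k<m. x^k / fact k)"
      unfolding poly_p x_def power_mult_distrib by (simp add: sum_distrib_left algebra_simps)
    have "\<bar>s - c\<bar> \<le> a/2" using s unfolding c_def atLeastAtMost_iff abs_le_iff by linarith
    then have "t * \<bar>s - c\<bar> \<le> t * (a/2)" using t by (rule mult_left_mono)
    then have x_le: "\<bar>x\<bar> \<le> a*t/2" using t by (simp add: x_def abs_mult mult.commute)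
    have "\<bar>exp (-s*t) - poly p s\<bar> = exp (-c*t) * exp \<xi> * \<bar>x\<bar>^m / fact m"
      using exp_s poly_s taylor by (simp add: algebra_simps abs_mult power_abs)
    also have "\<dots> \<le> exp (-c*t) * exp (a*t/2) * (a*t/2)^m / fact m"
      using \<xi> x_le by (intro divide_right_mono mult_mono power_mono) auto
    also have "\<dots> = (1/2)^m * (exp (-(a*t)) * ((a*t)^m / fact m))"
      by (simp add: c_def power_divide flip: exp_add)
    also have "\<dots> \<le> (1/2)^m * (exp (-(a*t)) * exp (a*t))"
      using power_div_fact_le_exp[of "a*t" m] a t by (intro mult_left_mono) auto
    finally show ?thesis by (simp add: exp_minus)
  qed
  with deg show ?thesis by blast
qed

lemma abs_gbinomial_le_one:
  fixes \<gamma> :: real assumes "0 < \<gamma>" "\<gamma> < 1"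
  shows "\<bar>\<gamma> gchoose k\<bar> \<le> 1"
proof -
  have "\<bar>\<Prod>i = 0..<k. \<gamma> - of_nat i\<bar> \<le> fact k"
  proof (induction k)
    case (Suc k)
    have "\<bar>\<Prod>i = 0..<Suc k. \<gamma> - of_nat i\<bar> = \<bar>\<Prod>i = 0..<k. \<gamma> - of_nat i\<bar> * \<bar>\<gamma> - of_nat k\<bar>"
      by (simp add: abs_mult)
    also have "\<dots> \<le> fact k * real (Suc k)"
      using Suc assms by (intro mult_mono) auto
    also have "\<dots> = fact (Suc k)" by simp
    finally show ?case .
  qed simp
  then show ?thesis
    by (simp add: gbinomial_mult_fact'[symmetric] abs_mult)
qed

lemma powr_le_twice_powr:
  fixes s a \<gamma> :: real
  assumes "0 \<le> s" "s \<le> 2 * a" "0 \<le> \<gamma>" "\<gamma> \<le> 1"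
  shows "s powr \<gamma> \<le> 2 * a powr \<gamma>"
proof -
  have "s powr \<gamma> \<le> (2 * a) powr \<gamma>" using assms by (intro powr_mono2) auto
  also have "\<dots> = 2 powr \<gamma> * a powr \<gamma>" using assms by (simp add: powr_mult)
  also have "\<dots> \<le> 2 powr 1 * a powr \<gamma>" using assms by (intro mult_right_mono powr_mono) auto
  finally show ?thesis by simp
qed

lemma powr_poly_approx_dyadic:
  fixes a \<gamma> :: real
  assumes a: "0 < a" and \<gamma>: "0 < \<gamma>" "\<gamma> < 1"
  shows "\<exists>p. degree p \<le> m - 1 \<and> (\<forall>s\<in>{a..2*a}. \<bar>s powr \<gamma> - poly p s\<bar> \<le> 3 * a powr \<gamma> * (1/2)^m)"
proof -
  define c where "c = 3*a/2"
  have c: "0 < c" using a by (simp add: c_def)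
  define coeff where "coeff k = (\<gamma> gchoose k) * c powr (\<gamma> - of_nat k)" for k
  obtain p where deg: "degree p \<le> m - 1" and poly_p: "\<And>x. poly p x = (\<Sum>k<m. coeff k * (x - c)^k)"
    using taylor_poly_exists[of m coeff c] by blast
  have "\<bar>s powr \<gamma> - poly p s\<bar> \<le> 3 * a powr \<gamma> * (1/2)^m" if s: "s \<in> {a..2*a}" for s
  proof -
    define r where "r = \<bar>s - c\<bar> / c"
    have "\<bar>s - c\<bar> \<le> a/2" using s unfolding c_def atLeastAtMost_iff abs_le_iff by linarith
    then have r: "0 \<le> r" "r \<le> 1/3" and "\<bar>s - c\<bar> < c"
      using a by (auto simp: r_def c_def field_simps)
    then have "(\<lambda>k. coeff k * (s - c)^k) sums s powr \<gamma>"
      using gen_binomial_real'[of "s - c" c \<gamma>] by (simp add: coeff_def mult_ac)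
    then have tail: "(\<lambda>k. coeff (k+m) * (s - c)^(k+m)) sums (s powr \<gamma> - poly p s)"
      unfolding poly_p by (rule sums_split_initial_segment)
    have geometric: "(\<lambda>k. c powr \<gamma> * r^m * r^k) sums (c powr \<gamma> * r^m / (1 - r))"
      using geometric_sums[of r] r sums_mult[of "\<lambda>k. r^k" "1 / (1 - r)" "c powr \<gamma> * r^m"]
      by simp
    have term_bound: "\<bar>coeff k * (s - c)^k\<bar> \<le> c powr \<gamma> * r^k" for k
    proof -
      have "\<bar>coeff k * (s - c)^k\<bar> = \<bar>\<gamma> gchoose k\<bar> * (c powr \<gamma> * r^k)"
        using c by (simp add: coeff_def r_def abs_mult power_abs powr_diff powr_realpow power_divide)
      also have "\<dots> \<le> c powr \<gamma> * r^k"
        using abs_gbinomial_le_one[OF \<gamma>] r by (intro mult_left_le_one_le) auto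
      finally show ?thesis .
    qed
    have term_le: "\<bar>coeff (k+m) * (s - c)^(k+m)\<bar> \<le> c powr \<gamma> * r^m * r^k" for k
      using term_bound[of "k+m"] by (simp add: power_add mult_ac)
    have "\<bar>s powr \<gamma> - poly p s\<bar> \<le> c powr \<gamma> * r^m / (1 - r)"
      using sums_le[OF _ tail geometric] sums_le[OF _ sums_minus[OF tail] geometric] term_le
      unfolding abs_le_iff by (metis abs_le_iff minus_le_iff)
    also have "\<dots> = c powr \<gamma> * r^m * (1 / (1 - r))" by simp
    also have "\<dots> \<le> (2 * a powr \<gamma>) * (1/2)^m * (3/2)"
    proof (intro mult_mono)
      show "c powr \<gamma> \<le> 2 * a powr \<gamma>" using a \<gamma> by (intro powr_le_twice_powr) (auto simp: c_def)
      show "r^m \<le> (1/2)^m" using r by (intro power_mono) auto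
      show "1 / (1 - r) \<le> 3/2" using r by (simp add: field_simps)
    qed (use r in auto)
    finally show ?thesis by simp
  qed
  with deg show ?thesis by blast
qed

lemma exp_powr_poly_approx_dyadic:
  fixes a t \<gamma> :: real
  assumes a: "0 < a" and t: "0 \<le> t" and \<gamma>: "0 < \<gamma>" "\<gamma> < 1" and m: "0 < m"
  shows "\<exists>p. degree p \<le> 2*m - 1 \<and>
    (\<forall>s\<in>{a..2*a}. \<bar>exp (-s*t) * s powr \<gamma> - poly p s\<bar> \<le> 8 * a powr \<gamma> * (1/2)^m)"
proof -
  obtain p where deg_p: "degree p \<le> m - 1"
    and p: "\<And>s. s\<in>{a..2*a} \<Longrightarrow> \<bar>exp (-s*t) - poly p s\<bar> \<le> (1/2)^m"
    using exp_poly_approx_dyadic[OF a t] by blast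
  obtain q where deg_q: "degree q \<le> m - 1"
    and q: "\<And>s. s\<in>{a..2*a} \<Longrightarrow> \<bar>s powr \<gamma> - poly q s\<bar> \<le> 3 * a powr \<gamma> * (1/2)^m"
    using powr_poly_approx_dyadic[OF a \<gamma>] by blast
  have "degree (p * q) \<le> 2*m - 1"
    using degree_mult_le[of p q] deg_p deg_q m by linarith
  moreover have "\<bar>exp (-s*t) * s powr \<gamma> - poly (p * q) s\<bar> \<le> 8 * a powr \<gamma> * (1/2)^m"
    if s: "s\<in>{a..2*a}" for s
  proof -
    have "exp (-s*t) \<le> 1" and "(1/2::real)^m \<le> 1" using s a t by (auto simp: power_le_one)
    then have p_le: "\<bar>poly p s\<bar> \<le> 2"
      using p[OF s] exp_gt_zero[of "-s*t"] unfolding abs_le_iff by linarith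
    have "\<bar>exp (-s*t) * s powr \<gamma> - poly (p * q) s\<bar>
        = \<bar>(exp (-s*t) - poly p s) * s powr \<gamma> + poly p s * (s powr \<gamma> - poly q s)\<bar>"
      by (simp add: algebra_simps)
    also have "\<dots> \<le> \<bar>exp (-s*t) - poly p s\<bar> * s powr \<gamma> + \<bar>poly p s\<bar> * \<bar>s powr \<gamma> - poly q s\<bar>"
      by (rule order_trans[OF abs_triangle_ineq]) (simp add: abs_mult)
    also have "\<dots> \<le> (1/2)^m * (2 * a powr \<gamma>) + 2 * (3 * a powr \<gamma> * (1/2)^m)"
      using p[OF s] q[OF s] p_le powr_le_twice_powr[of s a \<gamma>] s a \<gamma>
      by (intro add_mono mult_mono) auto
    finally show ?thesis by simp
  qed
  ultimately show ?thesis by blast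
qed

lemma Gamma_integral_scaled:
  fixes \<beta> t :: real
  assumes \<beta>: "0 < \<beta>" and t: "0 < t"
  shows "((\<lambda>s. if 0 \<le> s then s powr (\<beta>-1) * exp (-s*t) else 0) has_integral Gamma \<beta> / t powr \<beta>) UNIV"
proof -
  define h where "h u = (if u \<in> {0..} then u powr (\<beta> - 1) / exp u else 0)" for u :: real
  have H: "(h has_integral Gamma \<beta>) UNIV"
    unfolding h_def has_integral_restrict_UNIV by (rule Gamma_integral_real[OF \<beta>])
  have "h absolutely_integrable_on UNIV"
    by (rule nonnegative_absolutely_integrable_1) (use H in \<open>auto simp: h_def\<close>)
  then have h_int: "integrable lebesgue h"
    by (simp add: set_integrable_def)
  have "integral\<^sup>L lebesgue h = Gamma \<beta>"
    using has_integral_integral_lebesgue[OF h_int] H has_integral_unique by blast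
  moreover have "integral\<^sup>L lebesgue h = \<bar>t\<bar> *\<^sub>R integral\<^sup>L lebesgue (\<lambda>x. h (0 + t * x))"
    using lebesgue_integral_real_affine[of t h 0] t by simp
  ultimately have "integral\<^sup>L lebesgue (\<lambda>x. h (0 + t * x)) = Gamma \<beta> / t"
    using t by (simp add: field_simps)
  moreover have "integrable lebesgue (\<lambda>x. h (0 + t * x))"
    using lebesgue_integrable_real_affine[OF h_int, of t 0] t by simp
  ultimately have "((\<lambda>x. h (0 + t * x)) has_integral Gamma \<beta> / t) UNIV"
    using has_integral_integral_lebesgue by metis
  from has_integral_mult_right[OF this, of "t powr (1 - \<beta>)"]
  have "((\<lambda>x. t powr (1 - \<beta>) * h (0 + t * x)) has_integral t powr (1 - \<beta>) * (Gamma \<beta> / t)) UNIV" .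
  moreover have "t powr (1 - \<beta>) * h (0 + t * x) = (if 0 \<le> x then x powr (\<beta>-1) * exp (-x*t) else 0)" for x
  proof (cases "0 \<le> x")
    case True
    have "(t*x) powr (\<beta>-1) = t powr (\<beta>-1) * x powr (\<beta>-1)" using True t by (simp add: powr_mult)
    moreover have "t powr (1-\<beta>) * t powr (\<beta>-1) = 1" using t by (simp add: powr_add[symmetric])
    ultimately show ?thesis using True t
      by (simp add: h_def exp_minus field_simps mult.commute)
  next
    case False then show ?thesis using t by (simp add: h_def zero_le_mult_iff)
  qed
  moreover have "t powr (1 - \<beta>) * (Gamma \<beta> / t) = Gamma \<beta> / t powr \<beta>"
    using t by (simp add: powr_diff field_simps)
  ultimately show ?thesis by simp
qed

text \<open>For \<open>s \<ge> R\<close> one has \<open>exp(-st) \<le> exp(-Rt/2) exp(-st/2)\<close>, and the second factor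
  integrates to \<open>\<Gamma>(\<beta>)/(t/2)\<^sup>\<beta>\<close>.\<close>
lemma Gamma_truncation_error:
  fixes \<beta> t R :: real
  assumes \<beta>: "1 < \<beta>" and t: "0 < t" and R: "0 \<le> R"
  shows "\<bar>Gamma \<beta> / t powr \<beta> - integral {0..R} (\<lambda>s. exp (-s*t) * s powr (\<beta> - 1))\<bar>
           \<le> exp (- (R * t / 2)) * (Gamma \<beta> / (t/2) powr \<beta>)"
proof -
  define h where "h u s = (if 0 \<le> s then s powr (\<beta>-1) * exp (-s*u) else 0)" for u s :: real
  define F where "F = (\<lambda>s. exp (-s*t) * s powr (\<beta> - 1))"
  have h_int: "(h u has_integral Gamma \<beta> / u powr \<beta>) UNIV" if "0 < u" for u
    unfolding h_def using Gamma_integral_scaled \<beta> that by simp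
  have "continuous_on {0..R} F" unfolding F_def
    by (intro continuous_intros continuous_on_powr') (use \<beta> in auto)
  then have "((\<lambda>s. if s \<in> {0..R} then F s else 0) has_integral integral {0..R} F) UNIV"
    using integrable_continuous_real has_integral_restrict_UNIV by blast
  from has_integral_diff[OF h_int[OF t] this]
  have diff: "((\<lambda>s. h t s - (if s \<in> {0..R} then F s else 0)) has_integral
      (Gamma \<beta> / t powr \<beta> - integral {0..R} F)) UNIV" .
  have bound: "((\<lambda>s. exp (- (R * t / 2)) * h (t/2) s) has_integral
      exp (- (R * t / 2)) * (Gamma \<beta> / (t/2) powr \<beta>)) UNIV"
    using has_integral_mult_right[OF h_int[of "t/2"]] t by simp
  have "0 \<le> h t s - (if s \<in> {0..R} then F s else 0)" for s
    by (auto simp: h_def F_def)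
  then have "0 \<le> Gamma \<beta> / t powr \<beta> - integral {0..R} F"
    using has_integral_nonneg[OF diff] by blast
  moreover have "h t s - (if s \<in> {0..R} then F s else 0) \<le> exp (- (R * t / 2)) * h (t/2) s" for s
  proof (cases "0 \<le> s \<and> s \<le> R")
    case False
    show ?thesis
    proof (cases "0 \<le> s")
      case True
      with False have "R < s" by simp
      then have "exp (-s*t) \<le> exp (- (R * t / 2)) * exp (- (s*t/2))"
        using mult_strict_right_mono[OF \<open>R < s\<close> t] by (simp flip: exp_add)
      then have "s powr (\<beta>-1) * exp (-s*t) \<le> s powr (\<beta>-1) * (exp (- (R * t / 2)) * exp (- (s*t/2)))"
        by (rule mult_left_mono) simp
      then show ?thesis using True False by (simp add: h_def mult_ac)
    qed (simp add: h_def)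
  qed (auto simp: h_def F_def)
  then have "Gamma \<beta> / t powr \<beta> - integral {0..R} F \<le> exp (- (R * t / 2)) * (Gamma \<beta> / (t/2) powr \<beta>)"
    using has_integral_le[OF diff bound] by blast
  ultimately show ?thesis by (simp add: F_def)
qed

lemma integral_split_dyadic:
  fixes f :: "real \<Rightarrow> real" and m k :: int
  assumes int: "\<And>X. f integrable_on {0..X}" and "m \<le> k + 1"
  shows "integral {0..2 powr real_of_int (k+1)} f
       = integral {0..2 powr m} f + (\<Sum>j\<in>{m..k}. integral {2 powr j..2 powr real_of_int (j+1)} f)"
proof -
  have "m - 1 \<le> k" using assms(2) by simp
  then show ?thesis
  proof (induction k rule: int_ge_induct)
    case (step k)
    have "integral {0..2 powr real_of_int (k+1+1)} f
        = integral {0..2 powr real_of_int (k+1)} f + integral {2 powr real_of_int (k+1)..2 powr real_of_int (k+1+1)} f"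
      using Henstock_Kurzweil_Integration.integral_combine[OF _ _ int] by simp
    moreover have "{m..k+1} = insert (k+1) {m..k}" and "k+1 \<notin> {m..k}"
      using step.hyps by auto
    ultimately show ?case using step.IH by simp
  qed simp
qed

lemma sum_two_powr_int:
  fixes m k :: int
  assumes "m \<le> k + 1"
  shows "(\<Sum>j\<in>{m..k}. 2 powr j) = 2 powr real_of_int (k+1) - 2 powr m"
proof -
  have "m - 1 \<le> k" using assms by simp
  then show ?thesis
  proof (induction k rule: int_ge_induct)
    case (step k)
    have "{m..k+1} = insert (k+1) {m..k}" and "k+1 \<notin> {m..k}"
      using step.hyps by auto
    then show ?case using step.IH by (simp add: powr_add)
  qed simp
qed

lemma two_powr_int_succ: "2 powr real_of_int (j + 1) = 2 * 2 powr real_of_int j"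
  by (simp add: powr_add)

lemma gauss_jacobi_exp_error:
  fixes \<beta> t a :: real
  assumes \<beta>: "1 < \<beta>" and t: "0 \<le> t" and a: "0 < a" "a \<le> 1" and at: "a * t \<le> 1"
    and n: "0 < n" and rule: "gauss_jacobi n \<beta> a s w"
  shows "\<bar>(\<Sum>k=1..n. exp (- s k * t) * w k) - integral {0..a} (\<lambda>x. exp (-x*t) * x powr (\<beta> - 1))\<bar>
         \<le> 12 * (1/2)^n"
proof -
  have weight_cont: "continuous_on {0..a} (\<lambda>x. x powr (\<beta> - 1))"
    by (intro continuous_intros continuous_on_powr') (use \<beta> in auto)
  interpret gauss_rule n 0 a "\<lambda>x. x powr (\<beta> - 1)" s w
  proof
    show "continuous_on {0..a} (\<lambda>x. x powr (\<beta> - 1))" by (rule weight_cont)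
  qed (use a n rule in \<open>auto simp: gauss_jacobi_def\<close>)
  obtain p where deg: "degree p \<le> n - 1"
    and approx: "\<And>x. x\<in>{0..a} \<Longrightarrow> \<bar>exp (-x*t) - poly p x\<bar> \<le> 6 * (1/2)^n"
    using exp_poly_approx_near_zero[OF t at] by blast
  have "continuous_on {0..a} (\<lambda>x. exp (-x*t))" by (intro continuous_intros)
  from quadrature_error_le[OF this _ approx] deg
  have "\<bar>(\<Sum>k=1..n. w k * exp (- s k * t)) - integral {0..a} (\<lambda>x. exp (-x*t) * x powr (\<beta> - 1))\<bar>
        \<le> 2 * (6 * (1/2)^n) * integral {0..a} (\<lambda>x. x powr (\<beta> - 1))"
    by simp
  also have "integral {0..a} (\<lambda>x. x powr (\<beta> - 1)) \<le> integral {0..a} (\<lambda>x. 1)"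
  proof (rule integral_le)
    show "(\<lambda>x. x powr (\<beta> - 1)) integrable_on {0..a}" by (rule integrable_continuous_real[OF weight_cont])
    show "x powr (\<beta> - 1) \<le> 1" if "x \<in> {0..a}" for x using that a \<beta> by (intro powr_le1) auto
  qed auto
  also have "integral {0..a} (\<lambda>x. 1::real) \<le> 1" using a by simp
  finally show ?thesis by (simp add: mult.commute)
qed

lemma gauss_legendre_exp_powr_error:
  fixes \<gamma> t a :: real
  assumes \<gamma>: "0 < \<gamma>" "\<gamma> < 1" and t: "0 \<le> t" and a: "0 < a" and n: "0 < n"
    and rule: "gauss_legendre n a (2*a) s w"
  shows "\<bar>(\<Sum>k=1..n. exp (- s k * t) * s k powr \<gamma> * w k) - integral {a..2*a} (\<lambda>x. exp (-x*t) * x powr \<gamma>)\<bar>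
         \<le> 16 * a powr \<gamma> * (1/2)^n * a"
proof -
  interpret gauss_rule n a "2*a" "\<lambda>x. 1" s w
    using a n rule by unfold_locales (auto simp: gauss_legendre_def)
  obtain p where deg: "degree p \<le> 2*n - 1"
    and approx: "\<And>x. x\<in>{a..2*a} \<Longrightarrow> \<bar>exp (-x*t) * x powr \<gamma> - poly p x\<bar> \<le> 8 * a powr \<gamma> * (1/2)^n"
    using exp_powr_poly_approx_dyadic[OF a t \<gamma> n] by blast
  have "continuous_on {a..2*a} (\<lambda>x. exp (-x*t) * x powr \<gamma>)"
    using a by (intro continuous_intros) auto
  from quadrature_error_le[OF this deg approx]
  have "\<bar>(\<Sum>k=1..n. w k * (exp (- s k * t) * s k powr \<gamma>)) - integral {a..2*a} (\<lambda>x. exp (-x*t) * x powr \<gamma> * 1)\<bar>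
        \<le> 2 * (8 * a powr \<gamma> * (1/2)^n) * integral {a..2*a} (\<lambda>x. 1)" .
  then show ?thesis using a by (simp add: mult_ac)
qed

lemma gauss_legendre_dyadic_blocks_error:
  fixes \<gamma> t B :: real and m k :: int
  assumes \<gamma>: "0 < \<gamma>" "\<gamma> < 1" and t: "0 \<le> t" and n: "0 < n" and mk: "m \<le> k + 1"
    and rules: "\<forall>j\<in>{m..k}. gauss_legendre n (2 powr j) (2 powr real_of_int (j+1)) (s j) (w j)"
    and B: "0 \<le> B" "\<And>j. j \<in> {m..k} \<Longrightarrow> (2 powr j) powr \<gamma> \<le> B"
  shows "\<bar>(\<Sum>j\<in>{m..k}. \<Sum>i=1..n. exp (- s j i * t) * s j i powr \<gamma> * w j i)
           - (\<Sum>j\<in>{m..k}. integral {2 powr j..2 powr real_of_int (j+1)} (\<lambda>x. exp (-x*t) * x powr \<gamma>))\<bar>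
         \<le> 16 * B * (1/2)^n * 2 powr real_of_int (k+1)"
proof -
  have block: "\<bar>(\<Sum>i=1..n. exp (- s j i * t) * s j i powr \<gamma> * w j i)
           - integral {2 powr j..2 powr real_of_int (j+1)} (\<lambda>x. exp (-x*t) * x powr \<gamma>)\<bar>
         \<le> 16 * B * (1/2)^n * 2 powr j" if j: "j \<in> {m..k}" for j
  proof -
    have "gauss_legendre n (2 powr j) (2 * 2 powr j) (s j) (w j)"
      using rules j unfolding two_powr_int_succ by blast
    from gauss_legendre_exp_powr_error[OF \<gamma> t _ n this]
    have "\<bar>(\<Sum>i=1..n. exp (- s j i * t) * s j i powr \<gamma> * w j i)
           - integral {2 powr j..2 powr real_of_int (j+1)} (\<lambda>x. exp (-x*t) * x powr \<gamma>)\<bar>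
         \<le> 16 * (2 powr j) powr \<gamma> * (1/2)^n * 2 powr j"
      unfolding two_powr_int_succ by simp
    also have "\<dots> \<le> 16 * B * (1/2)^n * 2 powr j"
      using B(2)[OF j] by (intro mult_right_mono) auto
    finally show ?thesis .
  qed
  have "\<bar>(\<Sum>j\<in>{m..k}. \<Sum>i=1..n. exp (- s j i * t) * s j i powr \<gamma> * w j i)
           - (\<Sum>j\<in>{m..k}. integral {2 powr j..2 powr real_of_int (j+1)} (\<lambda>x. exp (-x*t) * x powr \<gamma>))\<bar>
        \<le> (\<Sum>j\<in>{m..k}. 16 * B * (1/2)^n * 2 powr j)"
    unfolding sum_subtractf[symmetric] using block by (intro order_trans[OF sum_abs] sum_mono)
  also have "\<dots> = 16 * B * (1/2)^n * (2 powr real_of_int (k+1) - 2 powr m)"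
    by (simp only: sum_distrib_left[symmetric] sum_two_powr_int[OF mk])
  also have "\<dots> \<le> 16 * B * (1/2)^n * 2 powr real_of_int (k+1)"
    using B by (intro mult_left_mono) auto
  finally show ?thesis .
qed

lemma gauss_legendre_small_blocks_error:
  fixes \<gamma> t :: real and M :: int
  assumes \<gamma>: "0 < \<gamma>" "\<gamma> < 1" and t: "0 \<le> t" and n: "0 < n" and M: "M \<le> 0"
    and rules: "\<forall>j\<in>{M..-1}. gauss_legendre n (2 powr j) (2 powr real_of_int (j+1)) (s j) (w j)"
  shows "\<bar>(\<Sum>j\<in>{M..-1}. \<Sum>i=1..n. exp (- s j i * t) * s j i powr \<gamma> * w j i)
           - (\<Sum>j\<in>{M..-1}. integral {2 powr j..2 powr real_of_int (j+1)} (\<lambda>x. exp (-x*t) * x powr \<gamma>))\<bar>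
         \<le> 16 * (1/2)^n"
proof -
  have "(2 powr j) powr \<gamma> \<le> 1" if "j \<in> {M..-1}" for j
    using that \<gamma> powr_mono[of "real_of_int j" 0 2] by (intro powr_le1) auto
  from gauss_legendre_dyadic_blocks_error[OF \<gamma> t n _ rules _ this] M show ?thesis by simp
qed

lemma gauss_legendre_large_blocks_error:
  fixes \<gamma> t :: real and N :: nat
  assumes \<gamma>: "0 < \<gamma>" "\<gamma> < 1" and t: "0 \<le> t" and n: "0 < n"
    and rules: "\<forall>j\<in>{0..int N}. gauss_legendre n (2 powr j) (2 powr real_of_int (j+1)) (s j) (w j)"
  shows "\<bar>(\<Sum>j\<in>{0..int N}. \<Sum>i=1..n. exp (- s j i * t) * s j i powr \<gamma> * w j i)
           - (\<Sum>j\<in>{0..int N}. integral {2 powr j..2 powr real_of_int (j+1)} (\<lambda>x. exp (-x*t) * x powr \<gamma>))\<bar>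
         \<le> 16 * (2^(N+1))^2 * (1/2)^n"
proof -
  have R: "2 powr (real N + 1) = 2^(N+1)"
    using powr_realpow[of 2 "N+1"] by (simp add: add.commute)
  have "(2 powr j) powr \<gamma> \<le> 2 powr (real N + 1)" if "j \<in> {0..int N}" for j
  proof -
    have "(2 powr j) powr \<gamma> \<le> (2 powr j) powr 1"
      using that \<gamma> by (intro powr_mono ge_one_powr_ge_zero) auto
    also have "\<dots> \<le> 2 powr (real N + 1)"
      using that by (simp add: powr_mono)
    finally show ?thesis .
  qed
  from gauss_legendre_dyadic_blocks_error[OF \<gamma> t n _ rules _ this]
  show ?thesis by (simp add: R power2_eq_square mult_ac)
qed

lemma Gamma_truncation_error_uniform:
  fixes \<beta> \<delta> t R :: real
  assumes \<beta>: "1 < \<beta>" "\<beta> \<le> 2" and \<delta>: "0 < \<delta>" "\<delta> \<le> 1" "\<delta> \<le> t" and R: "0 \<le> R"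
  shows "\<bar>Gamma \<beta> / t powr \<beta> - integral {0..R} (\<lambda>s. exp (-s*t) * s powr (\<beta> - 1))\<bar>
           \<le> exp (- (R * \<delta> / 2)) * (Gamma \<beta> * (2/\<delta>)^2)"
proof -
  have t: "0 < t" using \<delta> by simp
  have "Gamma \<beta> / (t/2) powr \<beta> = Gamma \<beta> * (2/t) powr \<beta>"
    using t by (simp add: powr_divide divide_simps)
  also have "\<dots> \<le> Gamma \<beta> * (2/\<delta>) powr \<beta>"
    using \<beta> \<delta> t by (intro mult_left_mono powr_mono2 divide_left_mono) (auto intro: Gamma_real_pos[THEN less_imp_le])
  also have "(2/\<delta>) powr \<beta> \<le> (2/\<delta>) powr 2"
    using \<beta> \<delta> by (intro powr_mono) (auto simp: field_simps)
  then have "Gamma \<beta> * (2/\<delta>) powr \<beta> \<le> Gamma \<beta> * (2/\<delta>)^2"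
    using \<beta> \<delta> Gamma_real_pos[of \<beta>] by (simp add: powr_realpow)
  finally have "Gamma \<beta> / (t/2) powr \<beta> \<le> Gamma \<beta> * (2/\<delta>)^2" .
  moreover have "exp (- (R * t / 2)) \<le> exp (- (R * \<delta> / 2))"
    using \<delta> R by (simp add: mult_left_mono)
  ultimately have "exp (- (R * t / 2)) * (Gamma \<beta> / (t/2) powr \<beta>) \<le> exp (- (R * \<delta> / 2)) * (Gamma \<beta> * (2/\<delta>)^2)"
    using Gamma_real_pos[of \<beta>] \<beta> t by (intro mult_mono) auto
  with Gamma_truncation_error[OF \<beta>(1) t R] show ?thesis by linarith
qed

lemma dyadic_gauss_approximation_error:
  fixes \<beta> \<delta> T \<epsilon> :: real and n_o n_s n_l N :: nat and M :: int
    and so wo :: "nat \<Rightarrow> real" and s w s' w' :: "int \<Rightarrow> nat \<Rightarrow> real"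
  assumes \<beta>: "1 < \<beta>" "\<beta> < 2" and \<delta>: "0 < \<delta>" "\<delta> \<le> 1"
    and n: "0 < n_o" "0 < n_s" "0 < n_l" and M: "M < 0" "2 powr M * T \<le> 1"
    and budget_o: "12 * (1/2)^n_o \<le> \<epsilon>/4"
    and budget_s: "16 * (1/2)^n_s \<le> \<epsilon>/4"
    and budget_l: "16 * (2^(N+1))^2 * (1/2)^n_l \<le> \<epsilon>/4"
    and budget_tail: "exp (- (2^(N+1) * \<delta> / 2)) * (Gamma \<beta> * (2/\<delta>)^2) \<le> \<epsilon>/4"
  shows "\<forall>so wo s w s' w'.
          gauss_jacobi n_o \<beta> (2 powr real_of_int M) so wo \<longrightarrow>
          (\<forall>j \<in> {M..-1}. gauss_legendre n_s (2 powr real_of_int j) (2 powr real_of_int (j+1)) (s j) (w j)) \<longrightarrow>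
          (\<forall>j \<in> {0..int N}. gauss_legendre n_l (2 powr real_of_int j) (2 powr real_of_int (j+1)) (s' j) (w' j)) \<longrightarrow>
          (\<forall>t \<in> {\<delta>..T}.
             \<bar>Gamma \<beta> / t powr \<beta> -
               ((\<Sum>k=1..n_o. exp (- so k * t) * wo k)
                + (\<Sum>j\<in>{M..-1}. \<Sum>k=1..n_s. exp (- s j k * t) * s j k powr (\<beta> - 1) * w j k)
                + (\<Sum>j\<in>{0..int N}. \<Sum>k=1..n_l. exp (- s' j k * t) * s' j k powr (\<beta> - 1) * w' j k))\<bar>
             \<le> \<epsilon>)"
proof (intro allI impI ballI)
  fix so wo :: "nat \<Rightarrow> real" and s w s' w' :: "int \<Rightarrow> nat \<Rightarrow> real" and t :: real
  assume jacobi_rule: "gauss_jacobi n_o \<beta> (2 powr real_of_int M) so wo"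
    and small_rules: "\<forall>j \<in> {M..-1}. gauss_legendre n_s (2 powr real_of_int j) (2 powr real_of_int (j+1)) (s j) (w j)"
    and large_rules: "\<forall>j \<in> {0..int N}. gauss_legendre n_l (2 powr real_of_int j) (2 powr real_of_int (j+1)) (s' j) (w' j)"
    and t: "t \<in> {\<delta>..T}"
  define F where "F = (\<lambda>x. exp (-x*t) * x powr (\<beta> - 1))"
  define R :: real where "R = 2^(N+1)"
  have t_pos: "0 < t" using t \<delta> by simp
  have R_eq: "2 powr (real N + 1) = R"
    using powr_realpow[of 2 "N+1"] by (simp add: R_def add.commute)
  have "F integrable_on {0..X}" for X
    unfolding F_def by (intro integrable_continuous_real continuous_intros continuous_on_powr') (use \<beta> in auto)
  from integral_split_dyadic[OF this, of M "-1"] integral_split_dyadic[OF this, of 0 "int N"]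
  have split: "integral {0..R} F = integral {0..2 powr M} F
      + (\<Sum>j\<in>{M..-1}. integral {2 powr j..2 powr real_of_int (j+1)} F) + (\<Sum>j\<in>{0..int N}. integral {2 powr j..2 powr real_of_int (j+1)} F)"
    using M by (simp add: R_eq)
  have tail: "\<bar>Gamma \<beta> / t powr \<beta> - integral {0..R} F\<bar> \<le> \<epsilon>/4"
    using Gamma_truncation_error_uniform[of \<beta> \<delta> t R] \<beta> \<delta> t budget_tail
    by (simp add: F_def R_def)
  have "2 powr M * t \<le> 2 powr M * T" using t by (intro mult_left_mono) auto
  then have "2 powr M * t \<le> 1" using M by linarith
  moreover have "2 powr real_of_int M \<le> 1" using M powr_mono[of "real_of_int M" 0 2] by simp
  ultimately have jacobi: "\<bar>(\<Sum>k=1..n_o. exp (- so k * t) * wo k) - integral {0..2 powr M} F\<bar> \<le> \<epsilon>/4"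
    using gauss_jacobi_exp_error[OF \<beta>(1) less_imp_le[OF t_pos] _ _ _ n(1) jacobi_rule] budget_o
    by (simp add: F_def)
  from gauss_legendre_small_blocks_error[where \<gamma> = "\<beta> - 1", OF _ _ less_imp_le[OF t_pos] n(2) _ small_rules] \<beta> M budget_s
  have small: "\<bar>(\<Sum>j\<in>{M..-1}. \<Sum>k=1..n_s. exp (- s j k * t) * s j k powr (\<beta> - 1) * w j k)
      - (\<Sum>j\<in>{M..-1}. integral {2 powr j..2 powr real_of_int (j+1)} F)\<bar> \<le> \<epsilon>/4"
    by (simp add: F_def)
  from gauss_legendre_large_blocks_error[where \<gamma> = "\<beta> - 1", OF _ _ less_imp_le[OF t_pos] n(3) large_rules] \<beta> budget_l
  have large: "\<bar>(\<Sum>j\<in>{0..int N}. \<Sum>k=1..n_l. exp (- s' j k * t) * s' j k powr (\<beta> - 1) * w' j k)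
      - (\<Sum>j\<in>{0..int N}. integral {2 powr j..2 powr real_of_int (j+1)} F)\<bar> \<le> \<epsilon>/4"
    by (simp add: F_def)
  show "\<bar>Gamma \<beta> / t powr \<beta> - ((\<Sum>k=1..n_o. exp (- so k * t) * wo k)
                + (\<Sum>j\<in>{M..-1}. \<Sum>k=1..n_s. exp (- s j k * t) * s j k powr (\<beta> - 1) * w j k)
                + (\<Sum>j\<in>{0..int N}. \<Sum>k=1..n_l. exp (- s' j k * t) * s' j k powr (\<beta> - 1) * w' j k))\<bar> \<le> \<epsilon>"
    using split tail jacobi small large unfolding abs_le_iff by linarith
qed

lemma ln_two_ge_half: "1/2 \<le> ln (2::real)"
proof -
  have "exp (1/2::real)^2 = exp 1" by (simp flip: exp_of_nat_mult)
  also have "\<dots> \<le> 2^2" using exp_le by simp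
  finally have "exp (1/2::real) \<le> 2" by (rule power2_le_imp_le) simp
  then show ?thesis by (subst ln_ge_iff) auto
qed

lemma half_power_ceiling_le:
  fixes \<epsilon> L :: real assumes \<epsilon>: "0 < \<epsilon>" and L: "ln (1/\<epsilon>) \<le> L"
  shows "(1/2::real)^(nat \<lceil>2*L\<rceil>) \<le> \<epsilon>"
proof -
  define n where "n = nat \<lceil>2*L\<rceil>"
  have "L \<le> real n * (1/2)" unfolding n_def by linarith
  also have "\<dots> \<le> real n * ln 2" using ln_two_ge_half by (intro mult_left_mono) auto
  finally have "exp (- (real n * ln 2)) \<le> exp (- L)" by simp
  moreover have "(2::real)^n = exp (real n * ln 2)" by (simp add: exp_of_nat_mult)
  then have "(1/2::real)^n = exp (- (real n * ln 2))"
    by (simp add: exp_minus power_one_over inverse_eq_divide)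
  ultimately have "(1/2::real)^n \<le> exp (- L)" by simp
  also have "\<dots> \<le> exp (- ln (1/\<epsilon>))" using L by simp
  also have "\<dots> = \<epsilon>" using \<epsilon> by (simp add: ln_div exp_minus)
  finally show ?thesis unfolding n_def .
qed

lemma ceiling_log2_bounds:
  fixes x :: real assumes "1 \<le> x"
  shows "x \<le> 2 powr real (nat \<lceil>log 2 x\<rceil>)" and "real (nat \<lceil>log 2 x\<rceil>) \<le> 2 * ln x + 1"
proof -
  have log_nonneg: "0 \<le> log 2 x" using assms by simp
  have "x = 2 powr (log 2 x)" using assms by simp
  also have "\<dots> \<le> 2 powr real (nat \<lceil>log 2 x\<rceil>)" using log_nonneg by (intro powr_mono) linarith+
  finally show "x \<le> 2 powr real (nat \<lceil>log 2 x\<rceil>)" .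
  have "log 2 x = ln x / ln 2" by (simp add: log_def)
  also have "\<dots> \<le> ln x / (1/2)" using assms ln_two_ge_half by (intro divide_left_mono) auto
  moreover have "real (nat \<lceil>log 2 x\<rceil>) \<le> log 2 x + 1" using log_nonneg by linarith
  ultimately show "real (nat \<lceil>log 2 x\<rceil>) \<le> 2 * ln x + 1" by simp
qed

text \<open>With \<open>u = 1/\<delta>\<close> one gets \<open>R\<delta>/2 \<ge> L + (4 + 32G)u\<close>: the factor \<open>exp(-L)\<close> pays for \<open>\<epsilon>\<close>
  and \<open>exp(-(4 + 32G)u)\<close> absorbs \<open>G(2/\<delta>)\<^sup>2 = 4Gu\<^sup>2\<close>.\<close>
lemma exp_tail_budget:
  fixes G \<delta> L R \<epsilon> :: real
  assumes G: "0 < G" and \<delta>: "0 < \<delta>" "\<delta> \<le> 1" and L: "1 \<le> L" and \<epsilon>: "exp (- L) \<le> \<epsilon>"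
    and R: "2 * (8 + 64*G) * L / \<delta>^2 \<le> R"
  shows "exp (- (R * \<delta> / 2)) * (G * (2/\<delta>)^2) \<le> \<epsilon>/4"
proof -
  define u where "u = 1/\<delta>"
  have u: "1 \<le> u" using \<delta> by (simp add: u_def)
  have Lu: "L \<le> L * u" using mult_left_mono[OF u, of L] L by simp
  have "(4 + 32*G) * u \<le> (4 + 32*G) * (L * u)"
    using G L u by (intro mult_left_mono) auto
  moreover have "1 * (L * u) \<le> (4 + 32*G) * (L * u)"
    using G L u by (intro mult_right_mono) auto
  ultimately
  have "L + (4 + 32*G) * u \<le> (8 + 64*G) * L * u"
    using Lu by (simp add: algebra_simps)
  also have "\<dots> = (2 * (8 + 64*G) * L / \<delta>^2) * \<delta> / 2"
    using \<delta> by (simp add: u_def power2_eq_square field_simps)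
  also have "\<dots> \<le> R * \<delta> / 2" using R \<delta> by (intro divide_right_mono mult_right_mono) auto
  finally have exponent: "L + (4 + 32*G) * u \<le> R * \<delta> / 2" .
  have "(4*u)^2 / fact 2 \<le> exp (4*u)" using u by (intro power_div_fact_le_exp) simp
  moreover have "2 * G \<le> exp (32*G*u)"
    using G u exp_ge_add_one_self[of "32*G*u"] mult_left_mono[OF u, of G] by linarith
  ultimately have "(8 * u^2) * (2 * G) \<le> exp (4*u) * exp (32*G*u)"
    using G by (intro mult_mono) (auto simp: power2_eq_square)
  then have poly_le: "4 * G * u^2 \<le> exp ((4 + 32*G) * u) / 4"
    by (simp add: exp_add[symmetric] algebra_simps)
  have "exp (- (R * \<delta> / 2)) \<le> exp (- L) * exp (- ((4 + 32*G) * u))"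
    using exponent by (simp flip: exp_add)
  moreover have "G * (2/\<delta>)^2 = 4 * G * u^2" by (simp add: u_def power2_eq_square field_simps)
  ultimately have "exp (- (R * \<delta> / 2)) * (G * (2/\<delta>)^2) \<le> exp (- L) * exp (- ((4 + 32*G) * u)) * (4 * G * u^2)"
    using G by (metis mult_right_mono mult_nonneg_nonneg zero_le_power2 less_imp_le zero_le_numeral)
  also have "\<dots> \<le> exp (- L) * exp (- ((4 + 32*G) * u)) * (exp ((4 + 32*G) * u) / 4)"
    using poly_le by (intro mult_left_mono) auto
  also have "\<dots> = exp (- L) / 4" by (simp add: exp_minus)
  finally show ?thesis using \<epsilon> by linarith
qed

lemma half_power_budgets:
  fixes \<epsilon> :: real
  assumes "(1/2)^n \<le> \<epsilon>" "0 < \<epsilon>"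
  shows "12 * (1/2)^(n + 6) \<le> \<epsilon>/4" "16 * (1/2)^(n + 6) \<le> \<epsilon>/4"
    and "16 * (2^(N+1))^2 * (1/2)^(n + 2*N + 8) \<le> \<epsilon>/4"
proof -
  have "n + 2*N + 8 = n + (N+1) + (N+1) + 6" by simp
  then have "(2::real)^(n + 2*N + 8) = 2^n * (2^(N+1) * 2^(N+1)) * 64"
    by (simp only: power_add) simp
  then have half_powers: "(1/2::real)^(n + 6) = (1/2)^n / 64"
      "((2::real)^(N+1))^2 * (1/2)^(n + 2*N + 8) = (1/2)^n / 64"
    by (simp_all add: power_one_over power_add power2_eq_square)
  then show "12 * (1/2)^(n + 6) \<le> \<epsilon>/4" "16 * (1/2)^(n + 6) \<le> \<epsilon>/4"
    using assms by simp_all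
  have "16 * (2^(N+1))^2 * (1/2::real)^(n + 2*N + 8) = 16 * ((1/2)^n / 64)"
    unfolding mult.assoc half_powers(2) ..
  then show "16 * (2^(N+1))^2 * (1/2)^(n + 2*N + 8) \<le> \<epsilon>/4"
    using assms by simp
qed

lemma dyadic_gauss_parameters:
  fixes G \<delta> T \<epsilon> :: real
  assumes G: "0 < G" and \<delta>: "0 < \<delta>" "\<delta> \<le> 1" and T: "1 \<le> T" and \<epsilon>: "0 < \<epsilon>"
  defines "C \<equiv> 17 + 4 * ln (8 + 64 * G)" and "L \<equiv> max 1 (ln (1 / \<epsilon>))"
  shows "\<exists>n_o n_s n_l N (M :: int). 0 < n_o \<and> 0 < n_s \<and> 0 < n_l \<and> M < 0 \<and>
      real n_o \<le> C * L \<and> real n_s \<le> C * L \<and> real n_l \<le> C * (L + ln (1 / \<delta>)) \<and>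
      real N \<le> C * (1 + ln L + ln (1 / \<delta>)) \<and> real_of_int \<bar>M\<bar> \<le> C * (1 + ln T) \<and>
      2 powr M * T \<le> 1 \<and> 12 * (1/2)^n_o \<le> \<epsilon>/4 \<and> 16 * (1/2)^n_s \<le> \<epsilon>/4 \<and>
      16 * (2^(N+1))^2 * (1/2)^n_l \<le> \<epsilon>/4 \<and> exp (- (2^(N+1) * \<delta> / 2)) * (G * (2/\<delta>)^2) \<le> \<epsilon>/4"
proof -
  define K where "K = 8 + 64 * G"
  define n where "n = nat \<lceil>2 * L\<rceil>"
  define N where "N = nat \<lceil>log 2 (K * L / \<delta>^2)\<rceil>"
  define k where "k = nat \<lceil>log 2 T\<rceil>"
  have L: "1 \<le> L" "ln (1/\<epsilon>) \<le> L" by (auto simp: L_def)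
  have K: "8 \<le> K" "0 \<le> ln K" using G by (auto simp: K_def)
  have "1 \<le> K * L / \<delta>^2"
    using K L \<delta> power_le_one[of \<delta> 2] mult_mono[of 1 K 1 L] by (simp add: le_divide_eq)
  note N_bounds = ceiling_log2_bounds[OF this, folded N_def]
  note k_bounds = ceiling_log2_bounds[OF T, folded k_def]
  have n: "real n \<le> 2 * L + 1" "(1/2)^n \<le> \<epsilon>"
    using half_power_ceiling_le[OF \<epsilon> L(2)] L unfolding n_def by linarith+
  have ln_KL: "ln (K * L / \<delta>^2) = ln K + ln L + 2 * ln (1/\<delta>)"
    using \<delta> K L by (simp add: ln_mult ln_div ln_realpow)
  have logs: "0 \<le> ln L" "ln L \<le> L" "0 \<le> ln (1/\<delta>)" "0 \<le> ln T"
    using L \<delta> T ln_bound[of L] by auto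
  have C: "C = 17 + 4 * ln K" unfolding C_def K_def ..
  have C_mono: "17 * x \<le> C * x" if "0 \<le> x" for x
    using that K(2) mult_right_mono[of 17 C x] unfolding C by linarith
  have C_L: "C * L = 17 * L + 4 * (ln K * L)" unfolding C by (simp add: algebra_simps)
  have "ln K \<le> ln K * L" using mult_left_mono[OF L(1) K(2)] by simp
  then have sizes: "real (n + 6) \<le> C * L" "real (n + 2*N + 8) \<le> C * (L + ln (1 / \<delta>))"
      "real N \<le> C * (1 + ln L + ln (1 / \<delta>))" "real (k + 1) \<le> C * (1 + ln T)"
    using n N_bounds(2)[unfolded ln_KL] k_bounds(2) logs K L C C_L
      C_mono[OF logs(1)] C_mono[OF logs(3)] C_mono[OF logs(4)]
    unfolding of_nat_add of_nat_mult of_nat_numeral of_nat_1 distrib_left mult_1_right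
    by linarith+
  have "2 powr (- real (k + 1)) * T \<le> 2 powr (- real (k + 1)) * 2 powr real k"
    using k_bounds(1) by (intro mult_left_mono) auto
  also have "\<dots> \<le> 1" by (simp flip: powr_add)
  finally have M: "2 powr (- real (k + 1)) * T \<le> 1" .
  have "exp (- L) \<le> exp (- ln (1/\<epsilon>))" using L by simp
  then have "exp (- L) \<le> \<epsilon>" using \<epsilon> by (simp add: ln_div exp_minus)
  moreover have "2 * K * L / \<delta>^2 \<le> 2^(N+1)"
    using N_bounds(1) by (simp add: powr_realpow)
  ultimately have tail: "exp (- (2^(N+1) * \<delta> / 2)) * (G * (2/\<delta>)^2) \<le> \<epsilon>/4"
    unfolding K_def by (rule exp_tail_budget[OF G \<delta> L(1)])
  show ?thesis
  proof (rule exI[of _ "n+6"], rule exI[of _ "n+6"], rule exI[of _ "n + 2*N + 8"], rule exI[of _ N],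
      rule exI[of _ "- int (k+1)"])
  qed (use tail sizes M half_power_budgets[OF n(2) \<epsilon>] in simp)
qed

theorem theorem2p5:
  fixes \<beta> :: real
  assumes "1 < \<beta>" "\<beta> < 2"
  shows "\<exists>C > 0. \<forall>\<delta> T \<epsilon> :: real. 0 < \<delta> \<longrightarrow> \<delta> \<le> 1 \<longrightarrow> 1 \<le> T \<longrightarrow> 0 < \<epsilon> \<longrightarrow>
    (let L = max 1 (ln (1 / \<epsilon>)) in
     \<exists>(n_o :: nat) (n_s :: nat) (n_l :: nat) (N :: nat) (M :: int).
       0 < n_o \<and> 0 < n_s \<and> 0 < n_l \<and> M < 0 \<and>
       real n_o \<le> C * L \<and> real n_s \<le> C * L \<and>
       real n_l \<le> C * (L + ln (1 / \<delta>)) \<and>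
       real N \<le> C * (1 + ln L + ln (1 / \<delta>)) \<and>
       real_of_int \<bar>M\<bar> \<le> C * (1 + ln T) \<and>
       (\<forall>so wo s w s' w'.
          gauss_jacobi n_o \<beta> (2 powr real_of_int M) so wo \<longrightarrow>
          (\<forall>j \<in> {M..-1}. gauss_legendre n_s (2 powr real_of_int j) (2 powr real_of_int (j+1)) (s j) (w j)) \<longrightarrow>
          (\<forall>j \<in> {0..int N}. gauss_legendre n_l (2 powr real_of_int j) (2 powr real_of_int (j+1)) (s' j) (w' j)) \<longrightarrow>
          (\<forall>t \<in> {\<delta>..T}.
             \<bar>Gamma \<beta> / t powr \<beta> -
               ((\<Sum>k=1..n_o. exp (- so k * t) * wo k)
                + (\<Sum>j\<in>{M..-1}. \<Sum>k=1..n_s. exp (- s j k * t) * s j k powr (\<beta> - 1) * w j k)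
                + (\<Sum>j\<in>{0..int N}. \<Sum>k=1..n_l. exp (- s' j k * t) * s' j k powr (\<beta> - 1) * w' j k))\<bar>
             \<le> \<epsilon>)))"
proof -
  define C where "C = 17 + 4 * ln (8 + 64 * Gamma \<beta>)"
  have Gamma_pos: "0 < Gamma \<beta>" using assms by (simp add: Gamma_real_pos)
  show ?thesis
  proof (intro exI[of _ C] conjI allI impI, goal_cases)
    case 1
    show ?case using Gamma_pos by (simp add: C_def add_pos_nonneg)
  next
    case (2 \<delta> T \<epsilon>)
    from dyadic_gauss_parameters[OF Gamma_pos 2, folded C_def]
    show ?case
      unfolding Let_def
    proof (elim exE conjE, goal_cases)
      case (1 n_o n_s n_l N M)
      show ?case
        by (rule exI[of _ n_o], rule exI[of _ n_s], rule exI[of _ n_l], rule exI[of _ N], rule exI[of _ M])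
          (use 1 dyadic_gauss_approximation_error[OF assms 2(1,2)] in simp)
    qed
  qed
qed

end
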